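(* There exists a strongly bilevel feasible $w$ that is optimal to the NPP, i.e. there exist $w$ strongly bilevel feasible and $t$ such that $(w,t)$ is an optimal solution of the conjugate bilevel program $\max_{w,t}\{w^\top t: w\ge0,\ t\in\mathbf{T}(w)\}$.
   Context: Single-commodity network pricing setting: $G=(\mathcal{V},\mathcal{A})$ directed graph, arc costs $c\ge0$, nonempty tolled arc set $\mathcal{A}_1\subsetneq\mathcal{A}$, $n=|\mathcal{A}_1|$, $N$ node–arc incidence matrix, single origin $o$ and destination $d$ connected by a toll-free path, $b_o=1$, $b_d=-1$, $b_i=0$ otherwise, $\mathcal{X}=\{x\in\mathbb{R}^{\mathcal{A}}: Nx=b,\ x\ge0\}$, $x_{\mathcal{A}_1}$ the restriction of $x$ to $\mathcal{A}_1$; tolls $t\in\mathbb{R}^n$ are extended by zeros to $\bar t\in\mathbb{R}^{\mathcal{A}}$. Let $f(t)=\min\{c^\top x+t^\top x_{\mathcal{A}_1}: x\in\mathcal{X}\}$ for $t\ge0$, $f(t)=-\infty$ otherwise, and $g(w)=\sup_{t\in\mathbb{R}^n}\{f(t)-t^\top w\}$. A vector $w\ge0$ is strongly bilevel feasible when $\{w\}$ is the projection onto $w$-space of a face of $\operatorname{epi}(g)$ whose affine hull's direction space does not contain $(0,1)$. For $w\ge0$, $\mathbf{T}(w)$ is the set of $t$ that are parts of optimal solutions $(t,y)$ of $\max_{t,y}\{b^\top y-w^\top t: N^\top y-\bar t\le c,\ t\ge0\}$. The NPP here is $\max_{t\ge0,x}\{t^\top x_{\mathcal{A}_1}: x\in\arg\min_{x'\in\mathcal{X}}(c^\top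 x'+t^\top x'_{\mathcal{A}_1})\}$, whose optimal value equals that of the conjugate bilevel program. *)

theory Defs
  imports "HOL-Analysis.Analysis"
begin

(* Tolled arcs are indexed by a finite type 'k via an injection
  tol :: 'k => 'e (so n = CARD('k) and A1 = range tol). *)

definition incidence :: "('e \<Rightarrow> 'v) \<Rightarrow> ('e \<Rightarrow> 'v) \<Rightarrow> 'v \<Rightarrow> 'e \<Rightarrow> real" where
  "incidence tl_of hd_of i a =
     (if tl_of a = i then 1 else 0) - (if hd_of a = i then 1 else 0)"

definition bvec :: "'v \<Rightarrow> 'v \<Rightarrow> 'v \<Rightarrow> real" where
  "bvec o' d i = (if i = o' then 1 else if i = d then -1 else 0)"

definition flows :: "('e::finite \<Rightarrow> 'v) \<Rightarrow> ('e \<Rightarrow> 'v) \<Rightarrow> 'v \<Rightarrow> 'v \<Rightarrow> ('e \<Rightarrow> real) set" where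
  "flows tl_of hd_of o' d =
     {x. (\<forall>i. (\<Sum>a\<in>UNIV. incidence tl_of hd_of i a * x a) = bvec o' d i) \<and> (\<forall>a. x a \<ge> 0)}"

definition restr :: "('k \<Rightarrow> 'e) \<Rightarrow> ('e \<Rightarrow> real) \<Rightarrow> real^'k" where
  "restr tol x = (\<chi> k. x (tol k))"

definition ext_toll :: "('k \<Rightarrow> 'e) \<Rightarrow> real^'k \<Rightarrow> 'e \<Rightarrow> real" where
  "ext_toll tol t a = (if a \<in> range tol then t $ (inv tol a) else 0)"

definition nonneg :: "real^'k \<Rightarrow> bool" where
  "nonneg t \<longleftrightarrow> (\<forall>k. t $ k \<ge> 0)"

definition fval :: "('e::finite \<Rightarrow> 'v) \<Rightarrow> ('e \<Rightarrow> 'v) \<Rightarrow> 'v \<Rightarrow> 'v \<Rightarrow> ('e \<Rightarrow> real)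
     \<Rightarrow> ('k \<Rightarrow> 'e) \<Rightarrow> real^'k \<Rightarrow> ereal" where
  "fval tl_of hd_of o' d c tol t =
     (if nonneg t then
        (INF x\<in>flows tl_of hd_of o' d. ereal ((\<Sum>a\<in>UNIV. c a * x a) + t \<bullet> restr tol x))
      else -\<infinity>)"

definition gval :: "('e::finite \<Rightarrow> 'v) \<Rightarrow> ('e \<Rightarrow> 'v) \<Rightarrow> 'v \<Rightarrow> 'v \<Rightarrow> ('e \<Rightarrow> real)
     \<Rightarrow> ('k \<Rightarrow> 'e) \<Rightarrow> real^'k \<Rightarrow> ereal" where
  "gval tl_of hd_of o' d c tol w =
     (SUP t\<in>UNIV. fval tl_of hd_of o' d c tol t - ereal (t \<bullet> w))"

definition epigraph :: "(real^'k \<Rightarrow> ereal) \<Rightarrow> ((real^'k) \<times> real) set" where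
  "epigraph g = {(w, \<mu>). g w \<le> ereal \<mu>}"

definition aff_direction :: "'a::real_vector set \<Rightarrow> 'a set" where
  "aff_direction F = {u - v | u v. u \<in> affine hull F \<and> v \<in> affine hull F}"

definition strongly_bilevel_feasible ::
  "('e::finite \<Rightarrow> 'v) \<Rightarrow> ('e \<Rightarrow> 'v) \<Rightarrow> 'v \<Rightarrow> 'v \<Rightarrow> ('e \<Rightarrow> real)
     \<Rightarrow> ('k::finite \<Rightarrow> 'e) \<Rightarrow> real^'k \<Rightarrow> bool" where
  "strongly_bilevel_feasible tl_of hd_of o' d c tol w \<longleftrightarrow>
     nonneg w \<and>
     (\<exists>F. F face_of epigraph (gval tl_of hd_of o' d c tol) \<and> fst ` F = {w} \<and>
          (0, 1) \<notin> aff_direction F)"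

definition dual_feasible :: "('e::finite \<Rightarrow> 'v::finite) \<Rightarrow> ('e \<Rightarrow> 'v) \<Rightarrow> ('e \<Rightarrow> real)
     \<Rightarrow> ('k \<Rightarrow> 'e) \<Rightarrow> real^'k \<Rightarrow> ('v \<Rightarrow> real) \<Rightarrow> bool" where
  "dual_feasible tl_of hd_of c tol t y \<longleftrightarrow>
     nonneg t \<and>
     (\<forall>a. (\<Sum>i\<in>UNIV. incidence tl_of hd_of i a * y i) - ext_toll tol t a \<le> c a)"

definition dual_obj :: "'v::finite \<Rightarrow> 'v \<Rightarrow> real^'k \<Rightarrow> real^'k \<Rightarrow> ('v \<Rightarrow> real) \<Rightarrow> real" where
  "dual_obj o' d w t y = (\<Sum>i\<in>UNIV. bvec o' d i * y i) - w \<bullet> t"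

definition Tset :: "('e::finite \<Rightarrow> 'v::finite) \<Rightarrow> ('e \<Rightarrow> 'v) \<Rightarrow> 'v \<Rightarrow> 'v \<Rightarrow> ('e \<Rightarrow> real)
     \<Rightarrow> ('k::finite \<Rightarrow> 'e) \<Rightarrow> real^'k \<Rightarrow> (real^'k) set" where
  "Tset tl_of hd_of o' d c tol w =
     {t. \<exists>y. dual_feasible tl_of hd_of c tol t y \<and>
            (\<forall>t' y'. dual_feasible tl_of hd_of c tol t' y' \<longrightarrow>
                     dual_obj o' d w t' y' \<le> dual_obj o' d w t y)}"

definition cbp_optimal :: "('e::finite \<Rightarrow> 'v::finite) \<Rightarrow> ('e \<Rightarrow> 'v) \<Rightarrow> 'v \<Rightarrow> 'v \<Rightarrow> ('e \<Rightarrow> real)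
     \<Rightarrow> ('k::finite \<Rightarrow> 'e) \<Rightarrow> real^'k \<Rightarrow> real^'k \<Rightarrow> bool" where
  "cbp_optimal tl_of hd_of o' d c tol w t \<longleftrightarrow>
     nonneg w \<and> t \<in> Tset tl_of hd_of o' d c tol w \<and>
     (\<forall>w' t'. nonneg w' \<and> t' \<in> Tset tl_of hd_of o' d c tol w' \<longrightarrow> w' \<bullet> t' \<le> w \<bullet> t)"

definition tollfree_path :: "('e \<Rightarrow> 'v) \<Rightarrow> ('e \<Rightarrow> 'v) \<Rightarrow> ('k \<Rightarrow> 'e) \<Rightarrow> 'v \<Rightarrow> 'v \<Rightarrow> bool" where
  "tollfree_path tl_of hd_of tol o' d \<longleftrightarrow>
     (o', d) \<in> {(tl_of a, hd_of a) | a. a \<notin> range tol}\<^sup>*"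

end

(* By shortest-path LP duality, f(t) for t >= 0 is the least cost C p + t . W p of a simple
   o-d path p, where W p in {0,1}^n marks the tolled arcs of p, and T(w) is the set of maximisers
   of f(t) - w . t over t >= 0.  Tolls t for which p is a shortest path lie in T(W p); conversely,
   comparing t in T(w) with the scaled tolls s t bounds w . t by the revenue t' . W p earned in
   such a region.  Capping the tolls off p makes these regions compact, so a revenue-maximising
   pair (p, t) exists.  Among these pick one where W p has minimal support: then p is, up to paths
   with the same W, the strictly shortest path on an open ball of tolls, and the affine minorants
   of g given by these tolls single out (W p, C p) as an extreme point, i.e. a singleton face, of
   epi g. *)

theory Submission
  imports Defs "Graph_Theory.Shortest_Path"
begin

section \<open>Extreme points\<close>

lemma affine_vanishing_on_ball:
  fixes a :: "'a::real_inner"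
  assumes "0 < e" and vanish: "\<And>t. t \<in> ball x e \<Longrightarrow> b + t \<bullet> a = 0"
  shows "a = 0" and "b = 0"
proof -
  have "0 < norm a + 1" by (simp add: add_nonneg_pos)
  define s where "s = e / (2 * (norm a + 1))"
  have "0 < s" using assms(1) \<open>0 < norm a + 1\<close> by (simp add: s_def)
  have "norm (s *\<^sub>R a) \<le> s * (norm a + 1)" using \<open>0 < s\<close> by simp
  also have "\<dots> = e / 2" using \<open>0 < norm a + 1\<close> by (simp add: s_def field_simps)
  also have "\<dots> < e" using assms(1) by simp
  finally have "norm (s *\<^sub>R a) < e" .
  then have "b + (x + s *\<^sub>R a) \<bullet> a = 0" and "b + x \<bullet> a = 0"
    using assms(1) by (auto intro: vanish simp: dist_norm)
  then have "s * (a \<bullet> a) = 0" unfolding inner_add_left inner_scaleR_left by linarith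
  with \<open>0 < s\<close> show "a = 0" by simp
  with \<open>b + x \<bullet> a = 0\<close> show "b = 0" by simp
qed

lemma extreme_point_of_if_supported_on_ball:
  fixes S :: "('a::real_inner \<times> real) set"
  assumes "(w0, m0) \<in> S" and "0 < e"
    and supported: "\<And>t w m. t \<in> ball \<theta> e \<Longrightarrow> (w, m) \<in> S \<Longrightarrow> m0 + t \<bullet> w0 \<le> m + t \<bullet> w"
  shows "(w0, m0) extreme_point_of S"
proof -
  have "(w0, m0) \<notin> open_segment z1 z2" if "z1 \<in> S" "z2 \<in> S" for z1 z2
  proof
    assume "(w0, m0) \<in> open_segment z1 z2"
    then obtain u where u: "z1 \<noteq> z2" "0 < u" "u < 1" "(w0, m0) = (1 - u) *\<^sub>R z1 + u *\<^sub>R z2"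
      by (auto simp: in_segment)
    obtain w1 m1 w2 m2 where z: "z1 = (w1, m1)" "z2 = (w2, m2)" by fastforce
    define slack where "slack t w m = (m - m0) + t \<bullet> (w - w0)" for t w m
    have "slack t w1 m1 = 0 \<and> slack t w2 m2 = 0" if "t \<in> ball \<theta> e" for t
    proof -
      have "m0 + t \<bullet> w0 \<le> m1 + t \<bullet> w1" "m0 + t \<bullet> w0 \<le> m2 + t \<bullet> w2"
        using supported[OF that] \<open>z1 \<in> S\<close> \<open>z2 \<in> S\<close> z by auto
      then have "0 \<le> slack t w1 m1" "0 \<le> slack t w2 m2"
        by (simp_all add: slack_def inner_diff_right)
      moreover have "(1 - u) * slack t w1 m1 + u * slack t w2 m2
          = ((1 - u) * m1 + u * m2 - m0) + t \<bullet> ((1 - u) *\<^sub>R w1 + u *\<^sub>R w2 - w0)"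
        by (simp add: slack_def algebra_simps inner_add_right)
      then have "(1 - u) * slack t w1 m1 + u * slack t w2 m2 = 0"
        using u(4) z by simp
      ultimately show ?thesis
        using u(2,3) by (smt (verit) mult_pos_pos mult_nonneg_nonneg)
    qed
    then have "w1 - w0 = 0 \<and> m1 - m0 = 0 \<and> w2 - w0 = 0 \<and> m2 - m0 = 0"
      using affine_vanishing_on_ball[OF \<open>0 < e\<close>] unfolding slack_def by meson
    then show False using u(1) z by simp
  qed
  with assms(1) show ?thesis by (auto simp: extreme_point_of_def)
qed

section \<open>Tolls on a finite family of paths\<close>

lemma inner_cap_eq:
  fixes t w :: "real^'k::finite"
  assumes "\<And>k. w $ k \<noteq> 0 \<Longrightarrow> t $ k \<le> M"
  shows "(\<chi> k. min (t $ k) M) \<bullet> w = t \<bullet> w"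
  unfolding inner_vec_def by (rule sum.cong) (use assms in \<open>auto simp: min_def\<close>)

text \<open>\<open>P\<close> stands for the simple \<open>o\<close>-\<open>d\<close> paths, \<open>C p\<close> for the untolled cost of \<open>p\<close> and
  \<open>W p\<close> for the indicator of the tolled arcs on \<open>p\<close>.  Then \<open>min_cost\<close> is \<open>f\<close> on \<open>t \<ge> 0\<close>,
  \<open>toll_argmax w\<close> is \<open>T(w)\<close> and \<open>conjugate_epigraph\<close> is the epigraph of \<open>g\<close>.\<close>

locale path_family =
  fixes P :: "'p set" and C :: "'p \<Rightarrow> real" and W :: "'p \<Rightarrow> real^'k::finite"
  assumes finite_paths: "finite P"
    and C_nonneg: "p \<in> P \<Longrightarrow> 0 \<le> C p"
    and W_01: "p \<in> P \<Longrightarrow> W p $ k = 0 \<or> W p $ k = 1"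
    and tollfree_path_exists: "\<exists>p\<in>P. W p = 0"
begin

definition cost :: "real^'k \<Rightarrow> 'p \<Rightarrow> real" where
  "cost t p = C p + t \<bullet> W p"

definition min_cost :: "real^'k \<Rightarrow> real" where
  "min_cost t = Min (cost t ` P)"

definition shortest_region :: "'p \<Rightarrow> (real^'k) set" where
  "shortest_region q = {t. nonneg t \<and> (\<forall>p\<in>P. cost t q \<le> cost t p)}"

definition toll_argmax :: "real^'k \<Rightarrow> (real^'k) set" where
  "toll_argmax w =
     {t. nonneg t \<and> (\<forall>t'. nonneg t' \<longrightarrow> min_cost t' - w \<bullet> t' \<le> min_cost t - w \<bullet> t)}"

definition conjugate_epigraph :: "((real^'k) \<times> real) set" where
  "conjugate_epigraph = {(w, m). \<forall>t. nonneg t \<longrightarrow> min_cost t - t \<bullet> w \<le> m}"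

definition tolls_used :: "'p \<Rightarrow> 'k set" where
  "tolls_used p = {k. W p $ k \<noteq> 0}"

definition revenue_optimal :: "'p \<Rightarrow> real^'k \<Rightarrow> bool" where
  "revenue_optimal q t \<longleftrightarrow> q \<in> P \<and> t \<in> shortest_region q \<and>
     (\<forall>q'\<in>P. \<forall>t'\<in>shortest_region q'. t' \<bullet> W q' \<le> t \<bullet> W q)"

lemma min_cost_le: "p \<in> P \<Longrightarrow> min_cost t \<le> cost t p"
  unfolding min_cost_def using finite_paths by simp

lemma min_cost_attained:
  obtains q where "q \<in> P" "min_cost t = cost t q"
proof -
  have "P \<noteq> {}" using tollfree_path_exists by blast
  then have "min_cost t \<in> cost t ` P"
    unfolding min_cost_def using finite_paths by simp
  then show thesis using that by blast
qed

lemma shortest_region_iff: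
  assumes q: "q \<in> P"
  shows "t \<in> shortest_region q \<longleftrightarrow> nonneg t \<and> min_cost t = cost t q"
proof -
  obtain p where p: "p \<in> P" "min_cost t = cost t p" by (rule min_cost_attained)
  have "(\<forall>p\<in>P. cost t q \<le> cost t p) \<longleftrightarrow> min_cost t = cost t q"
  proof
    assume "\<forall>p\<in>P. cost t q \<le> cost t p"
    then show "min_cost t = cost t q" using p min_cost_le[OF q] by (metis antisym)
  next
    assume "min_cost t = cost t q"
    then show "\<forall>p\<in>P. cost t q \<le> cost t p" using min_cost_le by metis
  qed
  then show ?thesis by (simp add: shortest_region_def)
qed

lemma W_nonneg: "p \<in> P \<Longrightarrow> 0 \<le> W p $ k"
  using W_01[of p k] by auto

lemma component_le_revenue:
  assumes "p \<in> P" "nonneg t" "W p $ k \<noteq> 0"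
  shows "t $ k \<le> t \<bullet> W p"
proof -
  have "t $ k = t $ k * W p $ k" using W_01[OF assms(1), of k] assms(3) by auto
  also have "\<dots> \<le> (\<Sum>j\<in>UNIV. t $ j * W p $ j)"
    by (rule member_le_sum) (use assms W_nonneg in \<open>auto simp: nonneg_def\<close>)
  finally show ?thesis by (simp add: inner_vec_def)
qed

lemma revenue_nonneg: "p \<in> P \<Longrightarrow> nonneg t \<Longrightarrow> 0 \<le> t \<bullet> W p"
  unfolding inner_vec_def using W_nonneg by (auto simp: nonneg_def intro!: sum_nonneg)

text \<open>A path paying a toll above \<open>M\<close> costs more than \<open>f(t)\<close>, so capping all tolls at \<open>M\<close>
  keeps \<open>q\<close> shortest.\<close>

lemma capped_tolls_in_shortest_region:
  assumes q: "q \<in> P" and t: "t \<in> shortest_region q"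
    and M: "0 \<le> M" "\<And>t. min_cost t < M"
  defines "t' \<equiv> \<chi> k. min (t $ k) M"
  shows "t' \<in> shortest_region q" and "t' \<bullet> W q = t \<bullet> W q"
proof -
  have tn: "nonneg t" and mt: "min_cost t = cost t q" using t shortest_region_iff[OF q] by auto
  have "t $ k < M" if "W q $ k \<noteq> 0" for k
    using component_le_revenue[OF q tn that] C_nonneg[OF q] M(2)[of t] mt by (simp add: cost_def)
  then show revenue_q: "t' \<bullet> W q = t \<bullet> W q"
    unfolding t'_def by (intro inner_cap_eq less_imp_le)
  have t'n: "nonneg t'" using tn M(1) by (simp add: t'_def nonneg_def)
  have "cost t' q \<le> cost t' p" if p: "p \<in> P" for p
  proof (cases "\<exists>k. W p $ k \<noteq> 0 \<and> M < t $ k")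
    case True
    then obtain k where k: "W p $ k \<noteq> 0" "M < t $ k" by blast
    have "M \<le> t' \<bullet> W p"
      using component_le_revenue[OF p t'n k(1)] k(2) by (simp add: t'_def)
    then show ?thesis using revenue_q mt M(2)[of t] C_nonneg[OF p] by (simp add: cost_def)
  next
    case False
    have "t' \<bullet> W p = t \<bullet> W p"
      unfolding t'_def by (rule inner_cap_eq) (use False in \<open>auto simp: not_less\<close>)
    then show ?thesis using revenue_q t p by (simp add: shortest_region_def cost_def)
  qed
  then show "t' \<in> shortest_region q" using t'n by (simp add: shortest_region_def)
qed

lemma shortest_region_capped:
  "\<exists>B. \<forall>q\<in>P. \<forall>t\<in>shortest_region q. \<exists>t'\<in>shortest_region q \<inter> cbox 0 B. t' \<bullet> W q = t \<bullet> W q"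
proof -
  obtain p0 where p0: "p0 \<in> P" "W p0 = 0" using tollfree_path_exists by blast
  define M where "M = C p0 + 1"
  have M: "0 \<le> M" "min_cost t < M" for t
    using C_nonneg[OF p0(1)] min_cost_le[OF p0(1), of t] p0(2) by (simp_all add: cost_def M_def)
  have "(\<chi> k. min (t $ k) M) \<in> cbox 0 (\<chi> k. M)" if "t \<in> shortest_region q" for q t
    using that M(1) by (simp add: mem_box_cart shortest_region_def nonneg_def)
  then show ?thesis
    using capped_tolls_in_shortest_region[OF _ _ M] by (intro exI[of _ "\<chi> k. M"]) blast
qed

lemma closed_shortest_region: "closed (shortest_region q)"
proof -
  have eq: "shortest_region q =
      (\<Inter>k. {t. 0 \<le> t $ k}) \<inter> (\<Inter>p\<in>P. {t. C q + t \<bullet> W q \<le> C p + t \<bullet> W p})"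
    by (auto simp: shortest_region_def nonneg_def cost_def)
  show ?thesis
    unfolding eq by (intro closed_Int closed_INT ballI closed_Collect_le continuous_intros)
qed

lemma revenue_optimal_exists: "\<exists>q t. revenue_optimal q t"
proof -
  obtain B where capped: "\<And>q t. q \<in> P \<Longrightarrow> t \<in> shortest_region q \<Longrightarrow>
      \<exists>t'\<in>shortest_region q \<inter> cbox 0 B. t' \<bullet> W q = t \<bullet> W q"
    using shortest_region_capped by blast
  define U where "U = (\<Union>q\<in>P. (\<lambda>t. t \<bullet> W q) ` (shortest_region q \<inter> cbox 0 B))"
  have "compact U"
    unfolding U_def using finite_paths
    by (intro compact_UN compact_continuous_image continuous_intros closed_Int_compact
        closed_shortest_region compact_cbox)
  moreover have "U \<noteq> {}"
  proof -
    obtain q where "q \<in> P" "min_cost 0 = cost 0 q" by (rule min_cost_attained)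
    then have "0 \<in> shortest_region q" by (simp add: shortest_region_iff nonneg_def)
    then obtain t' where "t' \<in> shortest_region q \<inter> cbox 0 B" using capped[OF \<open>q \<in> P\<close>] by blast
    then show ?thesis using \<open>q \<in> P\<close> by (auto simp: U_def)
  qed
  ultimately obtain r where "r \<in> U" and r_max: "\<forall>x\<in>U. x \<le> r"
    using compact_attains_sup by blast
  then obtain q t where qt: "q \<in> P" "t \<in> shortest_region q" "r = t \<bullet> W q"
    by (auto simp: U_def)
  have "t' \<bullet> W q' \<le> t \<bullet> W q" if q't': "q' \<in> P" "t' \<in> shortest_region q'" for q' t'
  proof -
    obtain t'' where "t'' \<in> shortest_region q' \<inter> cbox 0 B" "t'' \<bullet> W q' = t' \<bullet> W q'"
      using capped[OF q't'] by blast
    then have "t' \<bullet> W q' \<in> (\<lambda>t. t \<bullet> W q') ` (shortest_region q' \<inter> cbox 0 B)"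
      by (metis image_eqI)
    then have "t' \<bullet> W q' \<in> U" unfolding U_def using q't'(1) by blast
    then show ?thesis using r_max qt(3) by simp
  qed
  then show ?thesis using qt unfolding revenue_optimal_def by blast
qed

lemma shortest_region_subset_toll_argmax:
  assumes "q \<in> P" "t \<in> shortest_region q"
  shows "t \<in> toll_argmax (W q)"
proof -
  have "min_cost t' - W q \<bullet> t' \<le> min_cost t - W q \<bullet> t" if "nonneg t'" for t'
    using min_cost_le[OF assms(1), of t'] assms by (simp add: shortest_region_iff cost_def inner_commute)
  then show ?thesis using assms by (simp add: toll_argmax_def shortest_region_iff)
qed

text \<open>Comparing \<open>t\<close> with the scaled tolls \<open>s *\<^sub>R t\<close> shows that the follower's shortest path
  at \<open>s *\<^sub>R t\<close> already earns at least \<open>w \<bullet> t\<close> under \<open>t\<close>.\<close>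

lemma toll_argmax_revenue_le:
  assumes opt: "revenue_optimal q t0" and t: "t \<in> toll_argmax w"
  shows "w \<bullet> t \<le> t0 \<bullet> W q"
proof (rule field_le_mult_one_interval)
  fix s :: real assume s: "0 < s" "s < 1"
  have "nonneg (s *\<^sub>R t)" using t s by (simp add: toll_argmax_def nonneg_def)
  obtain p where p: "p \<in> P" "min_cost (s *\<^sub>R t) = cost (s *\<^sub>R t) p" by (rule min_cost_attained)
  have "min_cost (s *\<^sub>R t) - w \<bullet> (s *\<^sub>R t) \<le> min_cost t - w \<bullet> t"
    using t \<open>nonneg (s *\<^sub>R t)\<close> unfolding toll_argmax_def by blast
  then have "(1 - s) * (w \<bullet> t) \<le> (1 - s) * (t \<bullet> W p)"
    using p min_cost_le[OF p(1), of t] by (simp add: cost_def algebra_simps)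
  then have "s * (w \<bullet> t) \<le> (s *\<^sub>R t) \<bullet> W p" using s by (simp add: mult_left_mono)
  also have "\<dots> \<le> t0 \<bullet> W q"
  proof -
    have "s *\<^sub>R t \<in> shortest_region p"
      using p \<open>nonneg (s *\<^sub>R t)\<close> by (simp add: shortest_region_iff)
    then show ?thesis using opt p(1) unfolding revenue_optimal_def by blast
  qed
  finally show "s * (w \<bullet> t) \<le> t0 \<bullet> W q" .
qed

lemma revenue_optimal_if_dominated:
  assumes opt: "revenue_optimal q t" and p: "p \<in> P"
    and cheaper: "C p \<le> C q" and fewer_tolls: "\<And>k. W p $ k \<le> W q $ k"
  shows "revenue_optimal p t"
proof -
  have t: "t \<in> shortest_region q" using opt by (simp add: revenue_optimal_def)
  have tn: "nonneg t" using t by (simp add: shortest_region_def)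
  have "t \<bullet> W p \<le> t \<bullet> W q"
    unfolding inner_vec_def using tn fewer_tolls
    by (auto simp: nonneg_def intro!: sum_mono mult_left_mono)
  moreover have "cost t q \<le> cost t p" using t p by (simp add: shortest_region_def)
  ultimately have "cost t p = cost t q" and "t \<bullet> W p = t \<bullet> W q"
    using cheaper by (simp_all add: cost_def)
  then have "t \<in> shortest_region p" using t by (simp add: shortest_region_def)
  with opt p \<open>t \<bullet> W p = t \<bullet> W q\<close> show ?thesis by (simp add: revenue_optimal_def)
qed

lemma cheaper_if_fewer_tolls:
  assumes opt: "revenue_optimal q t"
    and minimal: "\<And>p t. revenue_optimal p t \<Longrightarrow> card (tolls_used q) \<le> card (tolls_used p)"
    and p: "p \<in> P" "W p \<noteq> W q" and fewer: "tolls_used p \<subseteq> tolls_used q"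
  shows "C q < C p"
proof (rule ccontr)
  assume "\<not> C q < C p"
  have q: "q \<in> P" using opt by (simp add: revenue_optimal_def)
  have fewer': "W q $ k \<noteq> 0" if "W p $ k \<noteq> 0" for k
    using fewer that by (auto simp: tolls_used_def)
  have "W p $ k \<le> W q $ k" for k
    using W_01[OF p(1), of k] W_01[OF q, of k] fewer'[of k] by auto
  then have "revenue_optimal p t"
    using revenue_optimal_if_dominated[OF opt p(1)] \<open>\<not> C q < C p\<close> by simp
  then have "card (tolls_used q) \<le> card (tolls_used p)" by (rule minimal)
  moreover have "tolls_used p \<noteq> tolls_used q"
  proof -
    obtain k where "W p $ k \<noteq> W q $ k" using p(2) by (auto simp: vec_eq_iff)
    then have "W p $ k = 0" "W q $ k \<noteq> 0"
      using W_01[OF p(1), of k] W_01[OF q, of k] fewer'[of k] by auto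
    then show ?thesis by (auto simp: tolls_used_def)
  qed
  then have "card (tolls_used p) < card (tolls_used q)"
    using fewer by (intro psubset_card_mono) auto
  ultimately show False by simp
qed

text \<open>The witness halves the optimal tolls on \<open>q\<close> and prices all other tolled arcs out.\<close>

lemma strictly_shortest_point:
  assumes opt: "revenue_optimal q t0"
    and minimal: "\<And>p t. revenue_optimal p t \<Longrightarrow> card (tolls_used q) \<le> card (tolls_used p)"
  obtains \<theta> where "nonneg \<theta>" "\<And>p. p \<in> P \<Longrightarrow> W p \<noteq> W q \<Longrightarrow> cost \<theta> q < cost \<theta> p"
proof -
  have q: "q \<in> P" and t0: "t0 \<in> shortest_region q" using opt by (simp_all add: revenue_optimal_def)
  have t0n: "nonneg t0" using t0 by (simp add: shortest_region_def)
  define M where "M = C q + t0 \<bullet> W q + 1"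
  define \<theta> where "\<theta> = (\<chi> k. if W q $ k = 0 then M else t0 $ k / 2)"
  have \<theta>_half: "\<theta> \<bullet> V = (t0 \<bullet> V) / 2" if "\<And>k. V $ k \<noteq> 0 \<Longrightarrow> W q $ k \<noteq> 0" for V
    unfolding inner_vec_def sum_divide_distrib by (rule sum.cong) (use that in \<open>auto simp: \<theta>_def\<close>)
  have M_pos: "0 < M"
    using C_nonneg[OF q] revenue_nonneg[OF q t0n] by (simp add: M_def)
  have M_gt: "cost \<theta> q < M"
    using \<theta>_half[of "W q"] revenue_nonneg[OF q t0n] by (simp add: cost_def M_def)
  have \<theta>n: "nonneg \<theta>" using t0n M_pos by (simp add: \<theta>_def nonneg_def)
  have "cost \<theta> q < cost \<theta> p" if p: "p \<in> P" "W p \<noteq> W q" for p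
  proof (cases "tolls_used p \<subseteq> tolls_used q")
    case True
    have "C q < C p" by (rule cheaper_if_fewer_tolls[OF opt _ p True]) (rule minimal)
    moreover have "cost t0 q \<le> cost t0 p" using t0 p(1) by (simp add: shortest_region_def)
    moreover have "\<theta> \<bullet> W p = (t0 \<bullet> W p) / 2"
      using True by (intro \<theta>_half) (auto simp: tolls_used_def)
    ultimately show ?thesis using \<theta>_half[of "W q"] by (simp add: cost_def)
  next
    case False
    then obtain k where k: "W p $ k \<noteq> 0" "W q $ k = 0" by (auto simp: tolls_used_def)
    have "M \<le> \<theta> \<bullet> W p" using component_le_revenue[OF p(1) \<theta>n k(1)] k(2) by (simp add: \<theta>_def)
    then show ?thesis using M_gt C_nonneg[OF p(1)] by (simp add: cost_def)
  qed
  with \<theta>n show thesis using that by blast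
qed

lemma ball_in_shortest_region:
  assumes q: "q \<in> P" and \<theta>n: "nonneg \<theta>"
    and cheapest: "\<And>p. p \<in> P \<Longrightarrow> W p = W q \<Longrightarrow> C q \<le> C p"
    and strict: "\<And>p. p \<in> P \<Longrightarrow> W p \<noteq> W q \<Longrightarrow> cost \<theta> q < cost \<theta> p"
  obtains \<theta>' e where "0 < e" "ball \<theta>' e \<subseteq> shortest_region q"
proof -
  define Strict where "Strict = (\<Inter>p\<in>{p\<in>P. W p \<noteq> W q}. {t. cost t q < cost t p})"
  have "open Strict"
    unfolding Strict_def cost_def using finite_paths
    by (intro open_INT ballI open_Collect_less continuous_intros) auto
  moreover have "\<theta> \<in> Strict" using strict by (auto simp: Strict_def)
  ultimately obtain e where e: "0 < e" "ball \<theta> e \<subseteq> Strict" by (rule openE)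
  define \<delta> where "\<delta> = e / (2 * (CARD('k) + 1))"
  have "0 < \<delta>" using e(1) by (simp add: \<delta>_def)
  have "(CARD('k) + 1) * \<delta> = e / 2" by (simp add: \<delta>_def field_simps)
  then have "(CARD('k) + 1) * \<delta> < e" using e(1) by simp
  \<comment> \<open>shifting \<open>\<theta>\<close> into the open orthant leaves a whole ball of nonnegative tolls inside \<open>Strict\<close>\<close>
  define \<theta>' where "\<theta>' = \<theta> + (\<chi> k. \<delta>)"
  have "dist \<theta> \<theta>' \<le> CARD('k) * \<delta>"
    using norm_le_l1_cart[of "\<chi> k. \<delta>"] \<open>0 < \<delta>\<close> by (simp add: \<theta>'_def dist_norm)
  have "t \<in> shortest_region q" if t: "t \<in> ball \<theta>' \<delta>" for t
  proof -
    have "dist \<theta> t < e"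
      using dist_triangle[of \<theta> t \<theta>'] t \<open>dist \<theta> \<theta>' \<le> CARD('k) * \<delta>\<close> \<open>(CARD('k) + 1) * \<delta> < e\<close>
      by (simp add: algebra_simps)
    then have "t \<in> Strict" using e(2) by auto
    have "0 \<le> t $ k" for k
    proof -
      have "\<theta>' $ k - t $ k < \<delta>"
        using component_le_norm_cart[of "\<theta>' - t" k] t by (simp add: dist_norm)
      then have "\<theta> $ k < t $ k" by (simp add: \<theta>'_def)
      moreover have "0 \<le> \<theta> $ k" using \<theta>n by (simp add: nonneg_def)
      ultimately show ?thesis by simp
    qed
    moreover have "cost t q \<le> cost t p" if "p \<in> P" for p
      using cheapest[OF that] \<open>t \<in> Strict\<close> that by (cases "W p = W q") (auto simp: Strict_def cost_def)
    ultimately show ?thesis by (simp add: shortest_region_def nonneg_def)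
  qed
  then show thesis using that[OF \<open>0 < \<delta>\<close>] by blast
qed

theorem extreme_revenue_optimal_exists:
  obtains q t where "q \<in> P" "t \<in> toll_argmax (W q)"
    and "\<forall>w t'. t' \<in> toll_argmax w \<longrightarrow> w \<bullet> t' \<le> W q \<bullet> t"
    and "(W q, C q) extreme_point_of conjugate_epigraph"
proof -
  obtain q t where opt: "revenue_optimal q t"
    and minimal: "\<And>p t'. revenue_optimal p t' \<Longrightarrow> card (tolls_used q) \<le> card (tolls_used p)"
    using revenue_optimal_exists
      ex_has_least_nat[of "\<lambda>p. \<exists>t. revenue_optimal p t" _ "\<lambda>p. card (tolls_used p)"]
    by metis
  have q: "q \<in> P" and t: "t \<in> shortest_region q" using opt by (simp_all add: revenue_optimal_def)
  obtain \<theta> where "nonneg \<theta>" "\<And>p. p \<in> P \<Longrightarrow> W p \<noteq> W q \<Longrightarrow> cost \<theta> q < cost \<theta> p"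
    using strictly_shortest_point[OF opt] minimal by blast
  moreover have "C q \<le> C p" if "p \<in> P" "W p = W q" for p
    using t that by (fastforce simp: shortest_region_def cost_def)
  ultimately obtain \<theta>' e where e: "0 < e" "ball \<theta>' e \<subseteq> shortest_region q"
    using ball_in_shortest_region[OF q] by blast
  have "(W q, C q) extreme_point_of conjugate_epigraph"
  proof (rule extreme_point_of_if_supported_on_ball[where \<theta> = \<theta>', OF _ e(1)])
    show "(W q, C q) \<in> conjugate_epigraph"
      unfolding conjugate_epigraph_def using min_cost_le[OF q]
      by (auto simp: cost_def inner_commute diff_le_eq)
  next
    fix t' w m assume "t' \<in> ball \<theta>' e" "(w, m) \<in> conjugate_epigraph"
    then have "t' \<in> shortest_region q" and "\<forall>t. nonneg t \<longrightarrow> min_cost t - t \<bullet> w \<le> m"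
      using e(2) by (auto simp: conjugate_epigraph_def)
    then have "nonneg t'" "min_cost t' = cost t' q" "min_cost t' - t' \<bullet> w \<le> m"
      using shortest_region_iff[OF q] by auto
    then show "C q + t' \<bullet> W q \<le> m + t' \<bullet> w" by (simp add: cost_def)
  qed
  moreover have "w \<bullet> t' \<le> W q \<bullet> t" if "t' \<in> toll_argmax w" for w t'
    using toll_argmax_revenue_le[OF opt that] by (simp add: inner_commute)
  ultimately show thesis using that q shortest_region_subset_toll_argmax[OF q t] by blast
qed

end

section \<open>Shortest paths and linear programming duality\<close>

lemma sum_incidence:
  fixes y :: "'v::finite \<Rightarrow> real"
  shows "(\<Sum>i\<in>UNIV. incidence tl_of hd_of i a * y i) = y (tl_of a) - y (hd_of a)"
proof -
  have "(\<Sum>i\<in>UNIV. incidence tl_of hd_of i a * y i)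
      = (\<Sum>i\<in>UNIV. (if tl_of a = i then y i else 0) - (if hd_of a = i then y i else 0))"
    by (rule sum.cong) (auto simp: incidence_def)
  then show ?thesis by (simp add: sum_subtractf)
qed

lemma sum_bvec:
  fixes y :: "'v::finite \<Rightarrow> real"
  assumes "o' \<noteq> d"
  shows "(\<Sum>i\<in>UNIV. bvec o' d i * y i) = y o' - y d"
proof -
  have "(\<Sum>i\<in>UNIV. bvec o' d i * y i)
      = (\<Sum>i\<in>UNIV. (if o' = i then y i else 0) - (if d = i then y i else 0))"
    by (rule sum.cong) (use assms in \<open>auto simp: bvec_def\<close>)
  then show ?thesis by (simp add: sum_subtractf)
qed

lemma sum_ext_toll:
  fixes x :: "'e::finite \<Rightarrow> real" and tol :: "'k::finite \<Rightarrow> 'e"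
  assumes "inj tol"
  shows "(\<Sum>a\<in>UNIV. ext_toll tol t a * x a) = t \<bullet> restr tol x"
proof -
  have "(\<Sum>a\<in>UNIV. ext_toll tol t a * x a) = (\<Sum>a\<in>range tol. ext_toll tol t a * x a)"
    by (rule sum.mono_neutral_right) (auto simp: ext_toll_def)
  also have "\<dots> = (\<Sum>k\<in>UNIV. ext_toll tol t (tol k) * x (tol k))"
    using assms by (simp add: sum.reindex)
  also have "\<dots> = t \<bullet> restr tol x"
    using assms by (simp add: ext_toll_def inner_vec_def restr_def)
  finally show ?thesis .
qed

lemma count_list_le_1_if_distinct: "distinct xs \<Longrightarrow> count_list xs x \<le> 1"
  by (induction xs) auto

lemma (in wf_digraph) mu_nonneg:
  assumes "\<And>e. e \<in> arcs G \<Longrightarrow> 0 \<le> w e"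
  shows "0 \<le> \<mu> w u v"
  unfolding \<mu>_def by (rule INF_greatest) (use pos_cost_pos_awalk_cost assms in auto)

lemma (in wf_digraph) mu_self:
  assumes "\<And>e. e \<in> arcs G \<Longrightarrow> 0 \<le> w e" and "s \<in> verts G"
  shows "\<mu> w s s = 0"
proof -
  have "\<mu> w s s \<le> 0"
    using min_cost_le_walk_cost[of s "[]" s w] assms(2) by (simp add: awalk_Nil_iff zero_ereal_def)
  then show ?thesis using mu_nonneg[of w s s] assms(1) by simp
qed

lemma ereal_min_le_min_add:
  fixes a b D :: ereal
  assumes "a \<le> b + ereal k" and "0 \<le> k"
  shows "min a D \<le> min b D + ereal k"
proof (cases "b \<le> D")
  case True
  then show ?thesis using assms(1) by (simp add: min.coboundedI1)
next
  case False
  have "D \<le> D + ereal k" using assms(2) by (cases D) simp_all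
  then have "min a D \<le> D + ereal k" using min.cobounded2 order.trans by blast
  then show ?thesis using False by simp
qed

text \<open>Truncating the distances from \<open>s\<close> at the (finite) distance to \<open>v\<close> keeps the triangle
  inequality and makes unreachable nodes harmless.\<close>

lemma (in fin_digraph) shortest_path_potential:
  assumes nonneg: "\<And>e. e \<in> arcs G \<Longrightarrow> 0 \<le> w e" and reach: "s \<rightarrow>\<^sup>* v"
  obtains y where "\<And>e. e \<in> arcs G \<Longrightarrow> y (tail G e) - y (head G e) \<le> w e"
    and "ereal (y s - y v) = \<mu> w s v"
proof -
  obtain D where D: "\<mu> w s v = ereal D"
    using min_cost_awalk[OF reach, of w] nonneg by blast
  have mu_nonneg': "0 \<le> \<mu> w s x" for x by (rule mu_nonneg) (rule nonneg)
  define y where "y x = - real_of_ereal (min (\<mu> w s x) (ereal D))" for x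
  have y_eq: "min (\<mu> w s x) (ereal D) = ereal (- y x)" for x
  proof -
    have "0 \<le> D" using mu_nonneg'[of v] D by simp
    then show ?thesis using mu_nonneg'[of x] by (cases "\<mu> w s x") (auto simp: y_def min_def)
  qed
  have "y (tail G e) - y (head G e) \<le> w e" if e: "e \<in> arcs G" for e
  proof -
    have "\<mu> w s (head G e) \<le> \<mu> w s (tail G e) + ereal (w e)"
      by (rule pos_cost_mu_triangle) (auto simp: arc_to_ends_def e nonneg)
    then have "min (\<mu> w s (head G e)) (ereal D) \<le> min (\<mu> w s (tail G e)) (ereal D) + ereal (w e)"
      using nonneg[OF e] by (rule ereal_min_le_min_add)
    then show ?thesis unfolding y_eq by simp
  qed
  moreover have "ereal (y s - y v) = \<mu> w s v"
    using y_eq[of s] y_eq[of v] D mu_nonneg'[of v] mu_self[of w s] nonneg reach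
    by (auto simp: reachable_in_verts)
  ultimately show thesis using that by blast
qed

definition digraph_of :: "('e \<Rightarrow> 'v) \<Rightarrow> ('e \<Rightarrow> 'v) \<Rightarrow> ('v, 'e) pre_digraph" where
  "digraph_of tl_of hd_of = \<lparr>verts = UNIV, arcs = UNIV, tail = tl_of, head = hd_of\<rparr>"

lemma digraph_of_simps [simp]:
  "verts (digraph_of tl_of hd_of) = UNIV" "arcs (digraph_of tl_of hd_of) = UNIV"
  "tail (digraph_of tl_of hd_of) = tl_of" "head (digraph_of tl_of hd_of) = hd_of"
  by (simp_all add: digraph_of_def)

lemma fin_digraph_of: "fin_digraph (digraph_of (tl_of :: 'e::finite \<Rightarrow> 'v::finite) hd_of)"
  by unfold_locales auto

section \<open>The network pricing problem\<close>

locale npp =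
  fixes tl_of hd_of :: "'e::finite \<Rightarrow> 'v::finite"
    and c :: "'e \<Rightarrow> real"
    and tol :: "'k::finite \<Rightarrow> 'e"
    and o' d :: 'v
  assumes c_nonneg: "\<And>a. 0 \<le> c a"
    and inj_tol: "inj tol"
    and od: "o' \<noteq> d"
    and tollfree: "tollfree_path tl_of hd_of tol o' d"
begin

sublocale G: fin_digraph "digraph_of tl_of hd_of" by (rule fin_digraph_of)

definition path_flow :: "'e list \<Rightarrow> 'e \<Rightarrow> real" where
  "path_flow p a = real (count_list p a)"

definition toll_pattern :: "'e list \<Rightarrow> real^'k" where
  "toll_pattern p = restr tol (path_flow p)"

definition arc_cost :: "real^'k \<Rightarrow> 'e \<Rightarrow> real" where
  "arc_cost t a = c a + ext_toll tol t a"

lemma sum_path_flow: "(\<Sum>a\<in>UNIV. f a * path_flow p a) = sum_list (map f p)"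
proof (induction p)
  case (Cons e p)
  have "(\<Sum>a\<in>UNIV. f a * path_flow (e # p) a)
      = (\<Sum>a\<in>UNIV. f a * path_flow p a + (if e = a then f a else 0))"
    by (rule sum.cong) (auto simp: path_flow_def algebra_simps)
  with Cons show ?case by (simp add: sum.distrib)
qed (simp add: path_flow_def)

lemma awalk_incidence:
  "G.awalk u p v \<Longrightarrow>
    sum_list (map (incidence tl_of hd_of i) p) = (if i = u then 1 else 0) - (if i = v then 1 else 0)"
  by (induction p arbitrary: u) (auto simp: G.awalk_Nil_iff G.awalk_Cons_iff incidence_def)

lemma path_flow_in_flows: "G.awalk o' p d \<Longrightarrow> path_flow p \<in> flows tl_of hd_of o' d"
  using awalk_incidence[of o' p d] od
  by (auto simp: flows_def bvec_def sum_path_flow) (simp add: path_flow_def)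

lemma arc_cost_nonneg: "nonneg t \<Longrightarrow> 0 \<le> arc_cost t a"
  using c_nonneg[of a] by (simp add: arc_cost_def ext_toll_def nonneg_def)

lemma dual_feasible_iff:
  "dual_feasible tl_of hd_of c tol t y \<longleftrightarrow>
    nonneg t \<and> (\<forall>a. y (tl_of a) - y (hd_of a) \<le> arc_cost t a)"
  by (auto simp: dual_feasible_def sum_incidence arc_cost_def diff_le_eq add.commute)

lemma weak_duality:
  assumes "dual_feasible tl_of hd_of c tol t y" and "x \<in> flows tl_of hd_of o' d"
  shows "(\<Sum>i\<in>UNIV. bvec o' d i * y i) \<le> (\<Sum>a\<in>UNIV. c a * x a) + t \<bullet> restr tol x"
proof -
  have flow: "\<And>i. (\<Sum>a\<in>UNIV. incidence tl_of hd_of i a * x a) = bvec o' d i"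
    and x_nonneg: "\<And>a. 0 \<le> x a"
    using assms(2) by (auto simp: flows_def)
  have "(\<Sum>i\<in>UNIV. bvec o' d i * y i) = (\<Sum>i\<in>UNIV. \<Sum>a\<in>UNIV. incidence tl_of hd_of i a * x a * y i)"
    by (simp add: flow[symmetric] sum_distrib_right)
  also have "\<dots> = (\<Sum>a\<in>UNIV. x a * (y (tl_of a) - y (hd_of a)))"
    by (subst sum.swap) (simp add: sum_incidence[symmetric] sum_distrib_left mult_ac)
  also have "\<dots> \<le> (\<Sum>a\<in>UNIV. x a * arc_cost t a)"
    using assms(1) x_nonneg by (intro sum_mono mult_left_mono) (auto simp: dual_feasible_iff)
  also have "\<dots> = (\<Sum>a\<in>UNIV. c a * x a) + t \<bullet> restr tol x"
    using sum_ext_toll[OF inj_tol, of t x]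
    by (simp add: arc_cost_def distrib_left sum.distrib mult.commute)
  finally show ?thesis .
qed

lemma tollfree_apath: "\<exists>p. G.apath o' p d \<and> set p \<inter> range tol = {}"
proof -
  have walk: "(u, v) \<in> {(tl_of a, hd_of a) | a. a \<notin> range tol}\<^sup>* \<Longrightarrow>
      \<exists>p. G.awalk u p v \<and> set p \<inter> range tol = {}" for u v
  proof (induction rule: converse_rtrancl_induct)
    case base
    then show ?case by (intro exI[of _ "[]"]) (simp add: G.awalk_Nil_iff)
  next
    case (step u u')
    then obtain a p where "tl_of a = u" "hd_of a = u'" "a \<notin> range tol"
        "G.awalk u' p v" "set p \<inter> range tol = {}"
      by blast
    then show ?case by (intro exI[of _ "a # p"]) (auto simp: G.awalk_Cons_iff)
  qed
  obtain p where "G.awalk o' p d" "set p \<inter> range tol = {}"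
    using walk[of o' d] tollfree unfolding tollfree_path_def by blast
  then show ?thesis
    using G.apath_awalk_to_apath G.awalk_to_apath_subset by blast
qed

sublocale paths: path_family "{p. G.apath o' p d}" "\<lambda>p. sum_list (map c p)" toll_pattern
proof
  show "finite {p. G.apath o' p d}" by (rule G.apaths_finite)
  show "0 \<le> sum_list (map c p)" for p using c_nonneg by (induction p) auto
  show "toll_pattern p $ k = 0 \<or> toll_pattern p $ k = 1" if "p \<in> {p. G.apath o' p d}" for p k
  proof -
    have "distinct p" using that G.distinct_verts_imp_distinct by (auto simp: G.apath_def)
    then have "count_list p (tol k) \<le> 1" by (rule count_list_le_1_if_distinct)
    then show ?thesis by (auto simp: toll_pattern_def restr_def path_flow_def)
  qed
  show "\<exists>p\<in>{p. G.apath o' p d}. toll_pattern p = 0"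
    using tollfree_apath
    by (auto simp: toll_pattern_def restr_def path_flow_def vec_eq_iff count_list_0_iff)
qed

lemma cost_eq_flow_cost:
  "paths.cost t p = (\<Sum>a\<in>UNIV. c a * path_flow p a) + t \<bullet> restr tol (path_flow p)"
  by (simp add: paths.cost_def toll_pattern_def sum_path_flow)

lemma cost_eq_awalk_cost: "paths.cost t p = G.awalk_cost (arc_cost t) p"
  using sum_ext_toll[OF inj_tol, of t "path_flow p"]
  by (simp add: paths.cost_def G.awalk_cost_def arc_cost_def[abs_def] sum_list_addf
      toll_pattern_def sum_path_flow)

lemma destination_reachable: "o' \<rightarrow>\<^sup>*\<^bsub>digraph_of tl_of hd_of\<^esub> d"
  using tollfree_apath G.reachable_awalk by (auto simp: G.apath_def)

lemma min_cost_eq_mu: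
  assumes "nonneg t"
  shows "ereal (paths.min_cost t) = G.\<mu> (arc_cost t) o' d"
proof (rule antisym)
  obtain q where "G.apath o' q d" "G.\<mu> (arc_cost t) o' d = G.awalk_cost (arc_cost t) q"
    using G.min_cost_awalk[OF destination_reachable, of "arc_cost t"] arc_cost_nonneg[OF assms]
    by blast
  then show "ereal (paths.min_cost t) \<le> G.\<mu> (arc_cost t) o' d"
    using paths.min_cost_le[of q t] by (simp add: cost_eq_awalk_cost)
next
  obtain p where "G.apath o' p d" "paths.min_cost t = paths.cost t p"
    by (rule paths.min_cost_attained) simp
  then show "G.\<mu> (arc_cost t) o' d \<le> ereal (paths.min_cost t)"
    using G.min_cost_le_walk_cost by (simp add: cost_eq_awalk_cost G.apath_def)
qed

lemma strong_duality:
  assumes "nonneg t"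
  obtains y where "dual_feasible tl_of hd_of c tol t y"
    and "(\<Sum>i\<in>UNIV. bvec o' d i * y i) = paths.min_cost t"
proof -
  obtain y where potential: "\<And>a. y (tl_of a) - y (hd_of a) \<le> arc_cost t a"
      and y_mu: "ereal (y o' - y d) = G.\<mu> (arc_cost t) o' d"
    using G.shortest_path_potential[of "arc_cost t", OF _ destination_reachable]
      arc_cost_nonneg[OF assms]
    by auto
  have "dual_feasible tl_of hd_of c tol t y"
    using assms potential by (simp add: dual_feasible_iff)
  moreover have "(\<Sum>i\<in>UNIV. bvec o' d i * y i) = paths.min_cost t"
    using y_mu[folded min_cost_eq_mu[OF assms]] by (simp add: sum_bvec[OF od])
  ultimately show thesis by (rule that)
qed

lemma dual_value_le_min_cost:
  assumes "dual_feasible tl_of hd_of c tol t y"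
  shows "(\<Sum>i\<in>UNIV. bvec o' d i * y i) \<le> paths.min_cost t"
proof -
  obtain p where "G.apath o' p d" "paths.min_cost t = paths.cost t p"
    by (rule paths.min_cost_attained) simp
  then show ?thesis
    using weak_duality[OF assms path_flow_in_flows] by (simp add: G.apath_def cost_eq_flow_cost)
qed

lemma fval_eq_min_cost:
  assumes "nonneg t"
  shows "fval tl_of hd_of o' d c tol t = ereal (paths.min_cost t)"
proof -
  let ?flow_cost = "\<lambda>x. ereal ((\<Sum>a\<in>UNIV. c a * x a) + t \<bullet> restr tol x)"
  have "(INF x\<in>flows tl_of hd_of o' d. ?flow_cost x) = ereal (paths.min_cost t)"
  proof (rule antisym)
    obtain p where "G.apath o' p d" "paths.min_cost t = paths.cost t p"
      by (rule paths.min_cost_attained) simp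
    then show "(INF x\<in>flows tl_of hd_of o' d. ?flow_cost x) \<le> ereal (paths.min_cost t)"
      by (intro INF_lower2[OF path_flow_in_flows]) (auto simp: G.apath_def cost_eq_flow_cost)
  next
    obtain y where y: "dual_feasible tl_of hd_of c tol t y"
        "(\<Sum>i\<in>UNIV. bvec o' d i * y i) = paths.min_cost t"
      using strong_duality[OF assms] by blast
    show "ereal (paths.min_cost t) \<le> (INF x\<in>flows tl_of hd_of o' d. ?flow_cost x)"
      by (intro INF_greatest) (use weak_duality[OF y(1)] y(2) in simp)
  qed
  then show ?thesis using assms by (simp add: fval_def)
qed

lemma Tset_eq_toll_argmax: "Tset tl_of hd_of o' d c tol w = paths.toll_argmax w"
proof (intro set_eqI iffI)
  fix t assume "t \<in> Tset tl_of hd_of o' d c tol w"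
  then obtain y where y: "dual_feasible tl_of hd_of c tol t y"
    and y_opt: "\<And>t' y'. dual_feasible tl_of hd_of c tol t' y' \<Longrightarrow> dual_obj o' d w t' y' \<le> dual_obj o' d w t y"
    by (auto simp: Tset_def)
  have "paths.min_cost t' - w \<bullet> t' \<le> paths.min_cost t - w \<bullet> t" if t': "nonneg t'" for t'
  proof -
    obtain y' where "dual_feasible tl_of hd_of c tol t' y'"
        "(\<Sum>i\<in>UNIV. bvec o' d i * y' i) = paths.min_cost t'"
      using strong_duality[OF t'] by blast
    then show ?thesis
      using y_opt dual_value_le_min_cost[OF y] by (fastforce simp: dual_obj_def)
  qed
  then show "t \<in> paths.toll_argmax w"
    using y by (simp add: paths.toll_argmax_def dual_feasible_def)
next
  fix t assume t: "t \<in> paths.toll_argmax w"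
  then obtain y where y: "dual_feasible tl_of hd_of c tol t y"
      "(\<Sum>i\<in>UNIV. bvec o' d i * y i) = paths.min_cost t"
    using strong_duality by (auto simp: paths.toll_argmax_def)
  have "dual_obj o' d w t' y' \<le> dual_obj o' d w t y" if "dual_feasible tl_of hd_of c tol t' y'" for t' y'
    using dual_value_le_min_cost[OF that] t y(2) that
    by (fastforce simp: dual_obj_def paths.toll_argmax_def dual_feasible_def)
  then show "t \<in> Tset tl_of hd_of o' d c tol w" using y(1) by (auto simp: Tset_def)
qed

lemma epigraph_eq_conjugate_epigraph:
  "epigraph (gval tl_of hd_of o' d c tol) = paths.conjugate_epigraph"
proof -
  have "fval tl_of hd_of o' d c tol t - ereal (t \<bullet> w) \<le> ereal m \<longleftrightarrow>
      (nonneg t \<longrightarrow> paths.min_cost t - t \<bullet> w \<le> m)" for t w m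
    by (cases "nonneg t") (simp_all add: fval_eq_min_cost, simp add: fval_def)
  then show ?thesis
    by (auto simp: epigraph_def paths.conjugate_epigraph_def gval_def SUP_le_iff)
qed

end

lemma strongly_bilevel_feasible_if_extreme_point:
  assumes "nonneg w" and "(w, m) extreme_point_of epigraph (gval tl_of hd_of o' d c tol)"
  shows "strongly_bilevel_feasible tl_of hd_of o' d c tol w"
proof -
  have "{(w, m)} face_of epigraph (gval tl_of hd_of o' d c tol)"
    using assms(2) by (simp add: face_of_singleton)
  moreover have "(0, 1) \<notin> aff_direction {(w, m)}"
    by (simp add: aff_direction_def affine_hull_sing)
  ultimately show ?thesis
    using assms(1) unfolding strongly_bilevel_feasible_def by (intro conjI exI[of _ "{(w, m)}"]) auto
qed

theorem theorem3:
  fixes tl_of hd_of :: "'e::finite \<Rightarrow> 'v::finite"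
    and c :: "'e \<Rightarrow> real"
    and tol :: "'k::finite \<Rightarrow> 'e"
    and o' d :: 'v
  assumes "\<forall>a. c a \<ge> 0"
    and "inj tol"
    and "range tol \<noteq> UNIV"
    and "o' \<noteq> d"
    and "tollfree_path tl_of hd_of tol o' d"
  shows "\<exists>w t. strongly_bilevel_feasible tl_of hd_of o' d c tol w \<and>
               cbp_optimal tl_of hd_of o' d c tol w t"
proof -
  \<comment> \<open>\<open>range tol \<noteq> UNIV\<close> is implied by the toll-free path and \<open>o' \<noteq> d\<close>.\<close>
  interpret npp tl_of hd_of c tol o' d
    using assms by unfold_locales auto
  obtain q t where "q \<in> {p. G.apath o' p d}" and t: "t \<in> paths.toll_argmax (toll_pattern q)"
    and bound: "\<forall>w t'. t' \<in> paths.toll_argmax w \<longrightarrow> w \<bullet> t' \<le> toll_pattern q \<bullet> t"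
    and extreme: "(toll_pattern q, sum_list (map c q)) extreme_point_of paths.conjugate_epigraph"
    by (rule paths.extreme_revenue_optimal_exists)
  have "nonneg (toll_pattern q)"
    by (simp add: nonneg_def toll_pattern_def restr_def path_flow_def)
  moreover have "strongly_bilevel_feasible tl_of hd_of o' d c tol (toll_pattern q)"
    using extreme[folded epigraph_eq_conjugate_epigraph]
    by (rule strongly_bilevel_feasible_if_extreme_point[OF \<open>nonneg (toll_pattern q)\<close>])
  moreover have "cbp_optimal tl_of hd_of o' d c tol (toll_pattern q) t"
    using \<open>nonneg (toll_pattern q)\<close> t bound by (simp add: cbp_optimal_def Tset_eq_toll_argmax)
  ultimately show ?thesis by blast
qed

end
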